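(* Let $(\mathfrak g,[\cdot,\cdot],[\![\cdot,\cdot,\cdot]\!])$ be a Lie-Yamaguti algebra and let $T:\mathfrak g^*\to\mathfrak g$ be an invertible linear map that is skew-symmetric, i.e. $\langle\alpha,T(\beta)\rangle+\langle\beta,T(\alpha)\rangle=0$ for all $\alpha,\beta\in\mathfrak g^*$. Define $\omega\in\wedge^2\mathfrak g^*$ by $\omega(x,y)=\langle T^{-1}(x),y\rangle$. Then $\omega$ is a symplectic structure on $\mathfrak g$ if and only if $T$ is a (skew-symmetric) relative Rota-Baxter operator on $\mathfrak g$ with respect to the coadjoint representation $(\mathfrak g^*;\mathrm{ad}^*,-\mathfrak R^*\tau)$.
   Context: All vector spaces are over a field of characteristic $0$. A Lie-Yamaguti algebra is a vector space $\mathfrak g$ with a bilinear skew-symmetric $[\cdot,\cdot]$ and a trilinear $[\![\cdot,\cdot,\cdot]\!]$ skew-symmetric in its first two arguments such that for all $x,y,z,w,t$: (1) $[[x,y],z]+[[y,z],x]+[[z,x],y]+[\![x,y,z]\!]+[\![y,z,x]\!]+[\![z,x,y]\!]=0$; (2) $[\![[x,y],z,w]\!]+[\![[y,z],x,w]\!]+[\![[z,x],y,w]\!]=0$; (3) $[\![x,y,[z,w]]\!]=[[\![x,y,z]\!],w]+[z,[\![x,y,w]\!]]$; (4) $[\![x,y,[\![z,w,t]\!]]\!]=[\![[\![x,y,z]\!],w,t]\!]+[\![z,[\![x,y,w]\!],t]\!]+[\![z,w,[\![x,y,t]\!]]\!]$. A symplectic structure on $\mathfrak g$ is a nondegenerate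 skew-symmetric bilinear form $\omega$ such that for all $x,y,z,w$: $\omega(x,[y,z])+\omega(y,[z,x])+\omega(z,[x,y])=0$ and $\omega(z,[\![x,y,w]\!])-\omega(x,[\![w,z,y]\!])+\omega(y,[\![w,z,x]\!])-\omega(w,[\![x,y,z]\!])=0$. For a representation $(V;\rho,\mu)$ (linear $\rho:\mathfrak g\to\mathfrak{gl}(V)$, bilinear $\mu:\otimes^2\mathfrak g\to\mathfrak{gl}(V)$) put $D_{\rho,\mu}(x,y)=\mu(y,x)-\mu(x,y)+[\rho(x),\rho(y)]-\rho([x,y])$; a relative Rota-Baxter operator with respect to $(V;\rho,\mu)$ is a linear $T:V\to\mathfrak g$ with $[Tu,Tv]=T(\rho(Tu)v-\rho(Tv)u)$ and $[\![Tu,Tv,Tw]\!]=T(D_{\rho,\mu}(Tu,Tv)w+\mu(Tv,Tw)u-\mu(Tu,Tw)v)$. The coadjoint representation is $V=\mathfrak g^*$, $\rho(x)=\mathrm{ad}^*_x$ with $\langle\mathrm{ad}^*_x\alpha,z\rangle=-\langle\alpha,[x,z]\rangle$, and $\mu(x,y)=-(\mathfrak R(y,x))^*$, where $\mathfrak R(x,y)z=[\![z,x,y]\!]$ and $\langle(\mathfrak R(x,y))^*\alpha,z\rangle=-\langle\alpha,\mathfrak R(x,y)z\rangle$. *)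

theory Defs
  imports Main "HOL.Vector_Spaces" "HOL-Library.Function_Algebras"
begin

definition bilin :: "('k::field \<Rightarrow> 'v::ab_group_add \<Rightarrow> 'v) \<Rightarrow> ('k \<Rightarrow> 'w::ab_group_add \<Rightarrow> 'w)
   \<Rightarrow> ('v \<Rightarrow> 'v \<Rightarrow> 'w) \<Rightarrow> bool" where
  "bilin s sw b \<longleftrightarrow> (\<forall>x. Vector_Spaces.linear s sw (b x)) \<and> (\<forall>y. Vector_Spaces.linear s sw (\<lambda>x. b x y))"

definition trilin :: "('k::field \<Rightarrow> 'v::ab_group_add \<Rightarrow> 'v) \<Rightarrow> ('v \<Rightarrow> 'v \<Rightarrow> 'v \<Rightarrow> 'v) \<Rightarrow> bool" where
  "trilin s t \<longleftrightarrow> (\<forall>x y. Vector_Spaces.linear s s (t x y)) \<and> (\<forall>x z. Vector_Spaces.linear s s (\<lambda>y. t x y z))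
      \<and> (\<forall>y z. Vector_Spaces.linear s s (\<lambda>x. t x y z))"

definition LieYamaguti ::
  "('k::field_char_0 \<Rightarrow> 'v::ab_group_add \<Rightarrow> 'v) \<Rightarrow> ('v \<Rightarrow> 'v \<Rightarrow> 'v) \<Rightarrow> ('v \<Rightarrow> 'v \<Rightarrow> 'v \<Rightarrow> 'v) \<Rightarrow> bool" where
  "LieYamaguti s br tr \<longleftrightarrow> vector_space s \<and> bilin s s br \<and> trilin s tr
   \<and> (\<forall>x y. br x y = - br y x)
   \<and> (\<forall>x y z. tr x y z = - tr y x z)
   \<and> (\<forall>x y z. br (br x y) z + br (br y z) x + br (br z x) y + tr x y z + tr y z x + tr z x y = 0)
   \<and> (\<forall>x y z w. tr (br x y) z w + tr (br y z) x w + tr (br z x) y w = 0)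
   \<and> (\<forall>x y z w. tr x y (br z w) = br (tr x y z) w + br z (tr x y w))
   \<and> (\<forall>x y z w t. tr x y (tr z w t) = tr (tr x y z) w t + tr z (tr x y w) t + tr z w (tr x y t))"

definition symplectic ::
  "('k::field_char_0 \<Rightarrow> 'v::ab_group_add \<Rightarrow> 'v) \<Rightarrow> ('v \<Rightarrow> 'v \<Rightarrow> 'v) \<Rightarrow> ('v \<Rightarrow> 'v \<Rightarrow> 'v \<Rightarrow> 'v)
    \<Rightarrow> ('v \<Rightarrow> 'v \<Rightarrow> 'k) \<Rightarrow> bool" where
  "symplectic s br tr \<omega> \<longleftrightarrow> bilin s (*) \<omega>
   \<and> (\<forall>x y. \<omega> x y = - \<omega> y x)
   \<and> (\<forall>x. (\<forall>y. \<omega> x y = 0) \<longrightarrow> x = 0)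
   \<and> (\<forall>x y z. \<omega> x (br y z) + \<omega> y (br z x) + \<omega> z (br x y) = 0)
   \<and> (\<forall>x y z w. \<omega> z (tr x y w) - \<omega> x (tr w z y) + \<omega> y (tr w z x) - \<omega> w (tr x y z) = 0)"

definition dual :: "('k::field \<Rightarrow> 'v::ab_group_add \<Rightarrow> 'v) \<Rightarrow> ('v \<Rightarrow> 'k) set" where
  "dual s = {f. Vector_Spaces.linear s (*) f}"

definition dscale :: "'k::field \<Rightarrow> ('v \<Rightarrow> 'k) \<Rightarrow> ('v \<Rightarrow> 'k)" where
  "dscale c \<alpha> = (\<lambda>x. c * \<alpha> x)"

definition Drm :: "('v \<Rightarrow> 'v \<Rightarrow> 'v) \<Rightarrow> ('v \<Rightarrow> 'w \<Rightarrow> 'w::ab_group_add) \<Rightarrow> ('v \<Rightarrow> 'v \<Rightarrow> 'w \<Rightarrow> 'w)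
   \<Rightarrow> 'v \<Rightarrow> 'v \<Rightarrow> 'w \<Rightarrow> 'w" where
  "Drm br \<rho> \<mu> x y = (\<lambda>u. \<mu> y x u - \<mu> x y u + (\<rho> x (\<rho> y u) - \<rho> y (\<rho> x u)) - \<rho> (br x y) u)"

(* relative Rota-Baxter operator T : V -> g w.r.t. a representation (V; rho, mu);
   V is given as a carrier set with scalar multiplication sV *)
definition relRB ::
  "('k::field \<Rightarrow> 'v::ab_group_add \<Rightarrow> 'v) \<Rightarrow> ('v \<Rightarrow> 'v \<Rightarrow> 'v) \<Rightarrow> ('v \<Rightarrow> 'v \<Rightarrow> 'v \<Rightarrow> 'v)
   \<Rightarrow> 'w::ab_group_add set \<Rightarrow> ('k \<Rightarrow> 'w \<Rightarrow> 'w) \<Rightarrow> ('v \<Rightarrow> 'w \<Rightarrow> 'w) \<Rightarrow> ('v \<Rightarrow> 'v \<Rightarrow> 'w \<Rightarrow> 'w)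
   \<Rightarrow> ('w \<Rightarrow> 'v) \<Rightarrow> bool" where
  "relRB s br tr V sV \<rho> \<mu> T \<longleftrightarrow>
     (\<forall>c. \<forall>u\<in>V. \<forall>v\<in>V. T (sV c u + v) = s c (T u) + T v)
   \<and> (\<forall>u\<in>V. \<forall>v\<in>V. br (T u) (T v) = T (\<rho> (T u) v - \<rho> (T v) u))
   \<and> (\<forall>u\<in>V. \<forall>v\<in>V. \<forall>w\<in>V. tr (T u) (T v) (T w)
          = T (Drm br \<rho> \<mu> (T u) (T v) w + \<mu> (T v) (T w) u - \<mu> (T u) (T w) v))"

(* coadjoint representation: <ad^*_x a, z> = - <a, [x,z]>,
   mu(x,y) = -(R(y,x))^*, so <mu(x,y) a, z> = <a, R(y,x) z> = <a, [[z,y,x]]> *)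
definition coad_rho :: "('v \<Rightarrow> 'v \<Rightarrow> 'v) \<Rightarrow> 'v \<Rightarrow> ('v \<Rightarrow> 'k::field) \<Rightarrow> ('v \<Rightarrow> 'k)" where
  "coad_rho br x \<alpha> = (\<lambda>z. - \<alpha> (br x z))"

definition coad_mu :: "('v \<Rightarrow> 'v \<Rightarrow> 'v \<Rightarrow> 'v) \<Rightarrow> 'v \<Rightarrow> 'v \<Rightarrow> ('v \<Rightarrow> 'k::field) \<Rightarrow> ('v \<Rightarrow> 'k)" where
  "coad_mu tr x y \<alpha> = (\<lambda>z. \<alpha> (tr z y x))"

end

theory Submission
  imports Defs
begin

text \<open>
  Write \<open>\<omega>\<close> for \<open>T\<inverse>\<close>, read as a bilinear form. Bijectivity and skew-symmetry of \<open>T\<close>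
  alone make \<open>\<omega>\<close> a nondegenerate skew form. Substituting \<open>u = \<omega> x\<close>, \<open>v = \<omega> y\<close>, \<open>w = \<omega> z\<close>
  and applying \<open>\<omega>\<close>, the two Rota-Baxter identities become
  \<open>\<omega> [x,y] = ad\<^sup>*\<^sub>x (\<omega> y) - ad\<^sup>*\<^sub>y (\<omega> x)\<close> and
  \<open>\<omega> [[x,y,z]] = D(x,y)(\<omega> z) + \<mu>(y,z)(\<omega> x) - \<mu>(x,z)(\<omega> y)\<close>. Evaluating at \<open>t\<close> and moving
  arguments across \<open>\<omega>\<close> by skew-symmetry turns the first into the cyclic closedness condition.
  In the second, Lie-Yamaguti identity (1) collapses the \<open>D\<close>-term to \<open>-\<omega> z [[x,y,t]]\<close>,
  which gives the ternary symplectic condition.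
\<close>

lemma vector_space_field_mult: "vector_space ((*) :: 'k::field \<Rightarrow> 'k \<Rightarrow> 'k)"
  by unfold_locales (auto simp: algebra_simps)

context vector_space
begin

lemma dual_iff:
  "f \<in> dual scale \<longleftrightarrow> (\<forall>x y. f (x + y) = f x + f y) \<and> (\<forall>c x. f (scale c x) = c * f x)"
  using vector_space_axioms vector_space_field_mult unfolding dual_def linear_iff by auto

lemma dual_module_hom: "f \<in> dual scale \<Longrightarrow> module_hom scale (*) f"
  unfolding dual_def by (simp add: module_hom_iff_linear)

lemma dual_neg: "f \<in> dual scale \<Longrightarrow> (\<lambda>x. - f x) \<in> dual scale"
  by (simp add: dual_iff)

lemma dual_add: "f \<in> dual scale \<Longrightarrow> g \<in> dual scale \<Longrightarrow> f + g \<in> dual scale"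
  by (simp add: dual_iff algebra_simps)

lemma dual_diff: "f \<in> dual scale \<Longrightarrow> g \<in> dual scale \<Longrightarrow> f - g \<in> dual scale"
  by (simp add: dual_iff algebra_simps)

lemma coad_rho_in_dual:
  assumes "bilin scale scale br" and "\<alpha> \<in> dual scale"
  shows "coad_rho br x \<alpha> \<in> dual scale"
  using assms unfolding bilin_def linear_iff coad_rho_def dual_iff by (simp add: algebra_simps)

lemma coad_mu_in_dual:
  assumes "trilin scale tr" and "\<alpha> \<in> dual scale"
  shows "coad_mu tr x y \<alpha> \<in> dual scale"
  using assms unfolding trilin_def linear_iff coad_mu_def dual_iff by simp

lemma Drm_coad_in_dual:
  assumes "bilin scale scale br" "trilin scale tr" and "\<alpha> \<in> dual scale"
  shows "Drm br (coad_rho br) (coad_mu tr) x y \<alpha> \<in> dual scale"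
proof -
  have "Drm br (coad_rho br) (coad_mu tr) x y \<alpha> = coad_mu tr y x \<alpha> - coad_mu tr x y \<alpha>
      + (coad_rho br x (coad_rho br y \<alpha>) - coad_rho br y (coad_rho br x \<alpha>)) - coad_rho br (br x y) \<alpha>"
    by (simp add: Drm_def fun_eq_iff)
  then show ?thesis
    using assms by (simp add: dual_add dual_diff coad_rho_in_dual coad_mu_in_dual)
qed

end

lemma LieYamaguti_vector_space: "LieYamaguti s br tr \<Longrightarrow> vector_space s"
  unfolding LieYamaguti_def by (elim conjE)

lemma LieYamaguti_tr_rotate:
  assumes "LieYamaguti s br tr"
  shows "tr x y t = tr t y x - tr t x y + br x (br y t) - br y (br x t) - br (br x y) t"
proof -
  note axioms = assms[unfolded LieYamaguti_def bilin_def]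
  have br_skew: "\<forall>a b. br a b = - br b a"
    using axioms by (elim conjE) assumption
  have tr_skew: "\<forall>a b c. tr a b c = - tr b a c"
    using axioms by (elim conjE) assumption
  have cyclic: "\<forall>x y z. br (br x y) z + br (br y z) x + br (br z x) y + tr x y z + tr y z x + tr z x y = 0"
    using axioms by (elim conjE) assumption
  have br_lin: "\<forall>x. Vector_Spaces.linear s s (br x)"
    using axioms by (elim conjE) assumption
  have "br (br t x) y = - br y (br t x)" and "br t x = - br x t"
    using br_skew by blast+
  moreover have "br y (- br x t) = - br y (br x t)"
    using module_hom.neg br_lin unfolding linear_iff_module_hom by blast
  ultimately have "br (br t x) y = br y (br x t)"
    by simp
  moreover have "br (br y t) x = - br x (br y t)" and "tr y t x = - tr t y x"
    using br_skew tr_skew by blast+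
  moreover have "br (br x y) t + br (br y t) x + br (br t x) y + tr x y t + tr y t x + tr t x y = 0"
    using cyclic by blast
  ultimately have "tr x y t - (tr t y x - tr t x y + br x (br y t) - br y (br x t) - br (br x y) t) = 0"
    by (simp add: algebra_simps)
  then show ?thesis
    by simp
qed

locale skew_dual_iso = vector_space s
  for s :: "'k::field \<Rightarrow> 'v::ab_group_add \<Rightarrow> 'v" +
  fixes T :: "('v \<Rightarrow> 'k) \<Rightarrow> 'v"
  assumes T_lin: "\<forall>c. \<forall>\<alpha>\<in>dual s. \<forall>\<beta>\<in>dual s. T (dscale c \<alpha> + \<beta>) = s c (T \<alpha>) + T \<beta>"
    and T_bij: "bij_betw T (dual s) UNIV"
    and T_skew: "\<forall>\<alpha>\<in>dual s. \<forall>\<beta>\<in>dual s. \<alpha> (T \<beta>) + \<beta> (T \<alpha>) = 0"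
begin

abbreviation \<omega> :: "'v \<Rightarrow> 'v \<Rightarrow> 'k" where
  "\<omega> \<equiv> inv_into (dual s) T"

lemma omega_in_dual: "\<omega> x \<in> dual s"
  using T_bij by (metis bij_betw_def inv_into_into UNIV_I)

lemma T_omega [simp]: "T (\<omega> x) = x"
  using T_bij by (metis bij_betw_imp_surj_on f_inv_into_f UNIV_I)

lemma omega_T [simp]: "\<alpha> \<in> dual s \<Longrightarrow> \<omega> (T \<alpha>) = \<alpha>"
  using T_bij by (metis bij_betw_inv_into_left)

lemma omega_eq_iff: "\<alpha> \<in> dual s \<Longrightarrow> \<omega> x = \<alpha> \<longleftrightarrow> x = T \<alpha>"
  by auto

lemma ball_dual_iff_all: "(\<forall>\<alpha>\<in>dual s. P \<alpha>) \<longleftrightarrow> (\<forall>x. P (\<omega> x))"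
proof
  show "\<forall>x. P (\<omega> x)" if "\<forall>\<alpha>\<in>dual s. P \<alpha>"
    using that omega_in_dual by blast
  show "\<forall>\<alpha>\<in>dual s. P \<alpha>" if "\<forall>x. P (\<omega> x)"
  proof
    fix \<alpha> assume "\<alpha> \<in> dual s"
    then have "\<omega> (T \<alpha>) = \<alpha>"
      by simp
    with that show "P \<alpha>"
      by metis
  qed
qed

lemma omega_skew: "\<omega> x y = - \<omega> y x"
proof -
  have "\<omega> x y + \<omega> y x = 0"
    using T_skew[rule_format, OF omega_in_dual omega_in_dual, of x y] by simp
  then show ?thesis
    by (simp add: eq_neg_iff_add_eq_0)
qed

lemma omega_apply_minus: "\<omega> x (- a) = - \<omega> x a"
  by (rule module_hom.neg[OF dual_module_hom[OF omega_in_dual]])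

lemma omega_apply_add: "\<omega> x (a + b) = \<omega> x a + \<omega> x b"
  by (rule module_hom.add[OF dual_module_hom[OF omega_in_dual]])

lemma omega_apply_diff: "\<omega> x (a - b) = \<omega> x a - \<omega> x b"
  by (rule module_hom.diff[OF dual_module_hom[OF omega_in_dual]])

lemma omega_bilin: "bilin s (*) \<omega>"
proof -
  have "(\<lambda>x. \<omega> x y) = (\<lambda>x. - \<omega> y x)" for y
    by (rule ext) (rule omega_skew)
  then show ?thesis
    using omega_in_dual dual_neg unfolding bilin_def dual_def by simp
qed

lemma omega_nondegenerate:
  assumes "\<forall>y. \<omega> x y = 0"
  shows "x = 0"
proof -
  have "\<omega> 0 y = - \<omega> y 0" for y
    by (rule omega_skew)
  then have "\<omega> 0 y = 0" for y
    using module_hom.zero[OF dual_module_hom[OF omega_in_dual]] by simp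
  with assms have "\<omega> x = \<omega> 0"
    by (simp add: fun_eq_iff)
  then show ?thesis
    by (metis T_omega)
qed

lemma relRB_coadjoint_iff:
  assumes "bilin s s br" and "trilin s tr"
  shows "relRB s br tr (dual s) dscale (coad_rho br) (coad_mu tr) T \<longleftrightarrow>
     (\<forall>x y. \<omega> (br x y) = coad_rho br x (\<omega> y) - coad_rho br y (\<omega> x))
   \<and> (\<forall>x y z. \<omega> (tr x y z) = Drm br (coad_rho br) (coad_mu tr) x y (\<omega> z)
                               + coad_mu tr y z (\<omega> x) - coad_mu tr x z (\<omega> y))"
proof -
  have "coad_rho br x (\<omega> y) - coad_rho br y (\<omega> x) \<in> dual s" for x y
    using assms by (simp add: dual_diff coad_rho_in_dual omega_in_dual)
  moreover have "Drm br (coad_rho br) (coad_mu tr) x y (\<omega> z)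
      + coad_mu tr y z (\<omega> x) - coad_mu tr x z (\<omega> y) \<in> dual s" for x y z
    using assms by (simp add: dual_add dual_diff coad_mu_in_dual Drm_coad_in_dual omega_in_dual)
  ultimately show ?thesis
    using T_lin unfolding relRB_def ball_dual_iff_all by (auto simp: omega_eq_iff)
qed

lemma omega_bracket_cyclic_iff:
  assumes "\<forall>a b. br a b = - br b a"
  shows "\<omega> x (br y t) + \<omega> y (br t x) + \<omega> t (br x y) = 0
     \<longleftrightarrow> \<omega> (br x y) t = (coad_rho br x (\<omega> y) - coad_rho br y (\<omega> x)) t"
proof -
  have "\<omega> y (br t x) = - \<omega> y (br x t)"
    using assms omega_apply_minus by metis
  moreover have "\<omega> t (br x y) = - \<omega> (br x y) t"
    by (rule omega_skew)
  ultimately show ?thesis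
    by (auto simp: coad_rho_def algebra_simps)
qed

end

locale lie_yamaguti_skew_dual_iso = skew_dual_iso s T
  for s :: "'k::field_char_0 \<Rightarrow> 'v::ab_group_add \<Rightarrow> 'v" and T +
  fixes br :: "'v \<Rightarrow> 'v \<Rightarrow> 'v" and tr :: "'v \<Rightarrow> 'v \<Rightarrow> 'v \<Rightarrow> 'v"
  assumes lie_yamaguti: "LieYamaguti s br tr"
begin

lemma bracket_skew: "\<forall>x y. br x y = - br y x"
  using lie_yamaguti unfolding LieYamaguti_def by (elim conjE)

lemma bilin_bracket: "bilin s s br"
  using lie_yamaguti unfolding LieYamaguti_def by (elim conjE)

lemma trilin_triple: "trilin s tr"
  using lie_yamaguti unfolding LieYamaguti_def by (elim conjE)

lemma symplectic_omega_iff: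
  "symplectic s br tr \<omega> \<longleftrightarrow>
     (\<forall>x y z. \<omega> x (br y z) + \<omega> y (br z x) + \<omega> z (br x y) = 0)
   \<and> (\<forall>x y z w. \<omega> z (tr x y w) - \<omega> x (tr w z y) + \<omega> y (tr w z x) - \<omega> w (tr x y z) = 0)"
  using omega_bilin omega_skew omega_nondegenerate unfolding symplectic_def by blast

lemma omega_triple_iff:
  "\<omega> z (tr x y t) - \<omega> x (tr t z y) + \<omega> y (tr t z x) - \<omega> t (tr x y z) = 0
     \<longleftrightarrow> \<omega> (tr x y z) t = (Drm br (coad_rho br) (coad_mu tr) x y (\<omega> z)
                             + coad_mu tr y z (\<omega> x) - coad_mu tr x z (\<omega> y)) t"
proof -
  have "\<omega> z (tr x y t) = \<omega> z (tr t y x) - \<omega> z (tr t x y) + \<omega> z (br x (br y t))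
      - \<omega> z (br y (br x t)) - \<omega> z (br (br x y) t)"
    using LieYamaguti_tr_rotate[OF lie_yamaguti, of x y t] by (simp add: omega_apply_add omega_apply_diff)
  moreover have "\<omega> t (tr x y z) = - \<omega> (tr x y z) t"
    by (rule omega_skew)
  ultimately have "\<omega> z (tr x y t) - \<omega> x (tr t z y) + \<omega> y (tr t z x) - \<omega> t (tr x y z)
      = \<omega> (tr x y z) t - (Drm br (coad_rho br) (coad_mu tr) x y (\<omega> z)
                             + coad_mu tr y z (\<omega> x) - coad_mu tr x z (\<omega> y)) t"
    by (simp add: Drm_def coad_rho_def coad_mu_def algebra_simps)
  then show ?thesis
    by simp
qed

end

theorem theorem4p3:
  fixes s :: "'k::field_char_0 \<Rightarrow> 'v::ab_group_add \<Rightarrow> 'v"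
    and br :: "'v \<Rightarrow> 'v \<Rightarrow> 'v" and tr :: "'v \<Rightarrow> 'v \<Rightarrow> 'v \<Rightarrow> 'v"
    and T :: "('v \<Rightarrow> 'k) \<Rightarrow> 'v"
  assumes LY: "LieYamaguti s br tr"
    and T_lin: "\<forall>c. \<forall>\<alpha>\<in>dual s. \<forall>\<beta>\<in>dual s. T (dscale c \<alpha> + \<beta>) = s c (T \<alpha>) + T \<beta>"
    and T_bij: "bij_betw T (dual s) UNIV"
    and T_skew: "\<forall>\<alpha>\<in>dual s. \<forall>\<beta>\<in>dual s. \<alpha> (T \<beta>) + \<beta> (T \<alpha>) = 0"
  shows "symplectic s br tr (\<lambda>x y. inv_into (dual s) T x y)
     \<longleftrightarrow> relRB s br tr (dual s) dscale (coad_rho br) (coad_mu tr) T"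
proof -
  interpret lie_yamaguti_skew_dual_iso s T br tr
    by (intro lie_yamaguti_skew_dual_iso.intro skew_dual_iso.intro skew_dual_iso_axioms.intro
        lie_yamaguti_skew_dual_iso_axioms.intro LieYamaguti_vector_space[OF LY] LY T_lin T_bij T_skew)
  have "symplectic s br tr \<omega> \<longleftrightarrow>
     (\<forall>x y z. \<omega> x (br y z) + \<omega> y (br z x) + \<omega> z (br x y) = 0)
   \<and> (\<forall>x y z w. \<omega> z (tr x y w) - \<omega> x (tr w z y) + \<omega> y (tr w z x) - \<omega> w (tr x y z) = 0)"
    by (rule symplectic_omega_iff)
  also have "\<dots> \<longleftrightarrow>
     (\<forall>x y. \<omega> (br x y) = coad_rho br x (\<omega> y) - coad_rho br y (\<omega> x))
   \<and> (\<forall>x y z. \<omega> (tr x y z) = Drm br (coad_rho br) (coad_mu tr) x y (\<omega> z)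
                               + coad_mu tr y z (\<omega> x) - coad_mu tr x z (\<omega> y))"
    using omega_bracket_cyclic_iff[OF bracket_skew] omega_triple_iff by (simp add: fun_eq_iff)
  also have "\<dots> \<longleftrightarrow> relRB s br tr (dual s) dscale (coad_rho br) (coad_mu tr) T"
    using relRB_coadjoint_iff[OF bilin_bracket trilin_triple] by simp
  finally show ?thesis .
qed

end
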